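(* Let $d>0$, $K_z>0$, $K_x>0$, $k>0$, $\sigma>0$, $l>0$, $\rho\ge0$, let $S:\mathbb{R}\to\mathbb{R}$ be a smooth odd saturating function with $S(0)=0$, $S'(0)=1$, let $\eta(z)=\exp(-z^2/(2\sigma^2))$, and consider the scalar equilibrium bifurcation problem $$g(z,d,u,b,K_x,K_z,k,\sigma,\rho,l) := (1-\eta(z))\,K_x\!\left(\frac{\rho}{l}\tanh(kz) - z - \frac{dz-uS(z)+b}{K_z\eta(z)}\right) - \frac{dz-uS(z)+b}{K_z} = 0$$ with $b$ as bifurcation parameter, $u>d$ close to $d$, and its two saddle-node bifurcation points $(z_1^*,b_1^* )$ with $z_1^*>0>b_1^*$ and $(z_2^*,b_2^* )$ with $z_2^*<0<b_2^*$. Then varying $u$ changes the size of the bistable region (the interval $(b_1^*,b_2^* )$ of $b$ values) by moving these saddle points: $\partial b_1^*/\partial u<0$ and $\partial b_2^*/\partial u>0$, so larger $u$ gives a larger bistable region (a larger input $|b|$ is required for switching) and smaller $u$ gives a smaller bistable region (a smaller input is required for switching).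
   Context: Zeros of $g$ correspond to equilibria of the opinion–position system $\dot z=-dz+uS(z)+b-K_z\eta(z)(z-x)$, $\dot x=(1-\eta(z))K_x(\frac{\rho}{l}\tanh(kz)-x)-\eta(z)(x-z)$, where $z$ is an agent's opinion between two tasks, $x$ its position, $u$ an attention gain and $b$ a bias; "switching" means the opinion changing sign when $b$ crosses a saddle-node value. *)

theory Defs
  imports "HOL-Analysis.Analysis"
begin

definition eta :: "real \<Rightarrow> real \<Rightarrow> real" where
  "eta \<sigma> z = exp (- (z\<^sup>2) / (2 * \<sigma>\<^sup>2))"

text \<open>The scalar equilibrium function g(z,d,u,b,K_x,K_z,k,sigma,rho,l), obtained by
  eliminating x from the equilibrium equations of the opinion-position system.\<close>
definition gfun :: "(real \<Rightarrow> real) \<Rightarrow> real \<Rightarrow> real \<Rightarrow> real \<Rightarrow> real \<Rightarrow> real \<Rightarrow> real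
    \<Rightarrow> real \<Rightarrow> real \<Rightarrow> real \<Rightarrow> real \<Rightarrow> real" where
  "gfun S z d u b Kx Kz k \<sigma> \<rho> l =
     (1 - eta \<sigma> z) * Kx * (\<rho> / l * tanh (k * z) - z - (d * z - u * S z - b) / (Kz * eta \<sigma> z))
     - (d * z - u * S z - b) / Kz"

definition smooth_fun :: "(real \<Rightarrow> real) \<Rightarrow> bool" where
  "smooth_fun S \<longleftrightarrow> (\<forall>n x. ((deriv ^^ n) S) differentiable (at x))"

definition saturating :: "(real \<Rightarrow> real) \<Rightarrow> bool" where
  "saturating S \<longleftrightarrow> bounded (range S) \<and> (\<forall>x. deriv S x > 0)"

definition saddle_node :: "(real \<Rightarrow> real) \<Rightarrow> real \<Rightarrow> real \<Rightarrow> real \<Rightarrow> real \<Rightarrow> real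
    \<Rightarrow> real \<Rightarrow> real \<Rightarrow> real \<Rightarrow> real \<Rightarrow> real \<Rightarrow> bool" where
  "saddle_node S d u Kx Kz k \<sigma> \<rho> l z b \<longleftrightarrow>
     gfun S z d u b Kx Kz k \<sigma> \<rho> l = 0
   \<and> deriv (\<lambda>w. gfun S w d u b Kx Kz k \<sigma> \<rho> l) z = 0
   \<and> deriv (deriv (\<lambda>w. gfun S w d u b Kx Kz k \<sigma> \<rho> l)) z \<noteq> 0
   \<and> deriv (\<lambda>c. gfun S z d u c Kx Kz k \<sigma> \<rho> l) b \<noteq> 0"

end

theory Submission
  imports Defs
begin

text \<open>Dividing g by the positive factor C(z) = (1 - \<eta>(z)) K_x / (K_z \<eta>(z)) + 1 / K_z
  (gfun_scale) turns the equilibrium condition into b = d z - P(z) - u S(z) with P = gfun_offset.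
  This is affine in u, and the saddle-node condition \<partial>g/\<partial>z = 0 says that z is a critical point
  of its right-hand side. Along a differentiable branch of saddle nodes the envelope theorem
  therefore gives db/du = -S(z), whose sign is the opposite of the sign of z because S is strictly
  increasing with S(0) = 0. This holds for every u, not only for u close to d.\<close>

lemma has_real_derivative_envelope_affine:
  fixes p q z b :: "real \<Rightarrow> real"
  assumes "open U" "u0 \<in> U"
    and z: "(z has_real_derivative z') (at u0)"
    and p: "(p has_real_derivative p') (at (z u0))"
    and q: "(q has_real_derivative q') (at (z u0))"
    and critical: "p' = u0 * q'"
    and b: "\<forall>u\<in>U. b u = p (z u) - u * q (z u)"
  shows "(b has_real_derivative - q (z u0)) (at u0)"
proof -
  have "((\<lambda>u. p (z u) - u * q (z u)) has_real_derivative
          p' * z' - (q (z u0) + u0 * (q' * z'))) (at u0)"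
    by (rule derivative_eq_intros DERIV_chain2[OF p z] DERIV_chain2[OF q z] refl | simp)+
  also have "p' * z' - (q (z u0) + u0 * (q' * z')) = - q (z u0)"
    using critical by (simp add: algebra_simps)
  finally show ?thesis
    by (rule has_field_derivative_transform_within_open[OF _ assms(1,2)]) (use b in auto)
qed

definition gfun_scale :: "real \<Rightarrow> real \<Rightarrow> real \<Rightarrow> real \<Rightarrow> real" where
  "gfun_scale \<sigma> Kx Kz w = (1 - eta \<sigma> w) * Kx / (Kz * eta \<sigma> w) + 1 / Kz"

definition gfun_offset :: "real \<Rightarrow> real \<Rightarrow> real \<Rightarrow> real \<Rightarrow> real \<Rightarrow> real \<Rightarrow> real \<Rightarrow> real" where
  "gfun_offset \<sigma> Kx Kz k \<rho> l w =
     (1 - eta \<sigma> w) * Kx * (\<rho> / l * tanh (k * w) - w) / gfun_scale \<sigma> Kx Kz w"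

lemma eta_pos: "eta \<sigma> w > 0"
  by (simp add: eta_def)

lemma eta_le_1: "eta \<sigma> w \<le> 1"
  by (simp add: eta_def)

lemma gfun_scale_pos:
  assumes "Kz > 0" "Kx \<ge> 0"
  shows "gfun_scale \<sigma> Kx Kz w > 0"
proof -
  have "(1 - eta \<sigma> w) * Kx / (Kz * eta \<sigma> w) \<ge> 0"
    using eta_pos[of \<sigma> w] eta_le_1[of \<sigma> w] assms by simp
  with assms(1) show ?thesis
    unfolding gfun_scale_def by (simp add: add_nonneg_pos)
qed

lemma gfun_eq_scale_mult:
  assumes "Kz > 0" "Kx \<ge> 0"
  shows "gfun S w d u b Kx Kz k \<sigma> \<rho> l =
    gfun_scale \<sigma> Kx Kz w * (gfun_offset \<sigma> Kx Kz k \<rho> l w - (d * w - u * S w - b))"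
proof -
  have "gfun S w d u b Kx Kz k \<sigma> \<rho> l =
      (1 - eta \<sigma> w) * Kx * (\<rho> / l * tanh (k * w) - w) - (d * w - u * S w - b) * gfun_scale \<sigma> Kx Kz w"
    unfolding gfun_def gfun_scale_def
    by (simp add: algebra_simps add_divide_distrib diff_divide_distrib)
  moreover have "gfun_offset \<sigma> Kx Kz k \<rho> l w * gfun_scale \<sigma> Kx Kz w =
      (1 - eta \<sigma> w) * Kx * (\<rho> / l * tanh (k * w) - w)"
    using gfun_scale_pos[OF assms, of \<sigma> w] unfolding gfun_offset_def by simp
  ultimately show ?thesis
    by (simp add: algebra_simps)
qed

lemma eta_has_real_derivative:
  "(eta \<sigma> has_real_derivative - w * eta \<sigma> w / \<sigma>\<^sup>2) (at w)"
  unfolding eta_def[abs_def] divide_inverse by (rule derivative_eq_intros refl | simp)+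

lemma eta_differentiable: "eta \<sigma> differentiable (at w)"
  using eta_has_real_derivative real_differentiable_def by blast

lemma gfun_scale_differentiable:
  assumes "Kz \<noteq> 0"
  shows "gfun_scale \<sigma> Kx Kz differentiable (at w)"
  unfolding gfun_scale_def[abs_def]
  using assms eta_differentiable eta_pos[of \<sigma> w] by (intro derivative_intros) auto

lemma gfun_offset_differentiable:
  assumes "Kz > 0" "Kx \<ge> 0"
  shows "gfun_offset \<sigma> Kx Kz k \<rho> l differentiable (at w)"
proof -
  have "((\<lambda>w. tanh (k * w)) has_real_derivative k * (1 - (tanh (k * w))\<^sup>2)) (at w)"
    by (rule derivative_eq_intros refl | simp)+
  then have "(\<lambda>w. tanh (k * w)) differentiable (at w)"
    using real_differentiable_def by blast
  then have "(\<lambda>w. (1 - eta \<sigma> w) * Kx * (\<rho> / l * tanh (k * w) - w)) differentiable (at w)"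
    using eta_differentiable by (intro derivative_intros)
  then show ?thesis
    unfolding gfun_offset_def[abs_def]
    using gfun_scale_pos[OF assms] gfun_scale_differentiable assms(1)
    by (intro differentiable_divide) (auto simp: less_imp_neq[symmetric])
qed

lemma saddle_node_critical_point:
  assumes "Kz > 0" "Kx \<ge> 0" "S differentiable (at z)"
    and "saddle_node S d u Kx Kz k \<sigma> \<rho> l z b"
  shows "b = d * z - gfun_offset \<sigma> Kx Kz k \<rho> l z - u * S z"
    and "d - deriv (gfun_offset \<sigma> Kx Kz k \<rho> l) z = u * deriv S z"
proof -
  let ?C = "gfun_scale \<sigma> Kx Kz" and ?P = "gfun_offset \<sigma> Kx Kz k \<rho> l"
  have g: "(\<lambda>w. gfun S w d u b Kx Kz k \<sigma> \<rho> l) = (\<lambda>w. ?C w * (?P w - (d * w - u * S w - b)))"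
    using gfun_eq_scale_mult[OF assms(1,2)] by auto
  have "?C z > 0"
    using gfun_scale_pos[OF assms(1,2)] .
  moreover have root: "?P z - (d * z - u * S z - b) = 0"
    using assms(4) \<open>?C z > 0\<close> unfolding saddle_node_def gfun_eq_scale_mult[OF assms(1,2)]
    by simp
  then show "b = d * z - ?P z - u * S z"
    by simp
  have CD: "(?C has_real_derivative deriv ?C z) (at z)"
    using gfun_scale_differentiable[of Kz] assms(1) DERIV_deriv_iff_real_differentiable by simp
  have PD: "(?P has_real_derivative deriv ?P z) (at z)"
    using gfun_offset_differentiable[OF assms(1,2)] DERIV_deriv_iff_real_differentiable by blast
  have SD: "(S has_real_derivative deriv S z) (at z)"
    using assms(3) DERIV_deriv_iff_real_differentiable by blast
  have "((\<lambda>w. ?C w * (?P w - (d * w - u * S w - b))) has_real_derivative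
          deriv ?C z * (?P z - (d * z - u * S z - b)) + ?C z * (deriv ?P z - (d - u * deriv S z))) (at z)"
    by (rule derivative_eq_intros CD PD SD refl | simp)+
  then have "deriv (\<lambda>w. gfun S w d u b Kx Kz k \<sigma> \<rho> l) z = ?C z * (deriv ?P z - (d - u * deriv S z))"
    unfolding g using root by (simp add: DERIV_imp_deriv)
  with assms(4) \<open>?C z > 0\<close> show "d - deriv ?P z = u * deriv S z"
    unfolding saddle_node_def by simp
qed

lemma saddle_node_branch_deriv:
  assumes "Kz > 0" "Kx \<ge> 0" "\<And>x. S differentiable (at x)"
    and "open U" "u0 \<in> U" "z differentiable (at u0)"
    and "\<forall>u\<in>U. saddle_node S d u Kx Kz k \<sigma> \<rho> l (z u) (b u)"
  shows "deriv b u0 = - S (z u0)"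
proof (rule DERIV_imp_deriv)
  let ?P = "gfun_offset \<sigma> Kx Kz k \<rho> l"
  have "(z has_real_derivative deriv z u0) (at u0)"
    using assms(6) DERIV_deriv_iff_real_differentiable by blast
  moreover have "((\<lambda>w. d * w - ?P w) has_real_derivative d - deriv ?P (z u0)) (at (z u0))"
    using gfun_offset_differentiable[OF assms(1,2)]
    by (intro derivative_eq_intros) (auto simp: DERIV_deriv_iff_real_differentiable)
  moreover have "(S has_real_derivative deriv S (z u0)) (at (z u0))"
    using assms(3) DERIV_deriv_iff_real_differentiable by blast
  moreover have "d - deriv ?P (z u0) = u0 * deriv S (z u0)"
    using saddle_node_critical_point(2)[OF assms(1,2,3)] assms(5,7) by blast
  moreover have "\<forall>u\<in>U. b u = (d * z u - ?P (z u)) - u * S (z u)"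
    using saddle_node_critical_point(1)[OF assms(1,2,3)] assms(7) by blast
  ultimately show "(b has_real_derivative - S (z u0)) (at u0)"
    by (rule has_real_derivative_envelope_affine[OF assms(4,5)])
qed

lemma saturating_strict_mono:
  assumes "saturating S" "\<And>x. S differentiable (at x)"
  shows "strict_mono S"
proof (rule strict_monoI)
  fix x y :: real
  assume "x < y"
  have S': "(S has_real_derivative deriv S t) (at t)" for t
    using assms(2) DERIV_deriv_iff_real_differentiable by blast
  have pos: "deriv S t > 0" for t
    using assms(1) unfolding saturating_def by blast
  show "S x < S y"
    using S' pos by (intro DERIV_pos_imp_increasing[OF \<open>x < y\<close>]) blast
qed

theorem theorem2:
  fixes d Kz Kx k \<sigma> l \<rho> :: real and S :: "real \<Rightarrow> real"
  assumes "d > 0" "Kz > 0" "Kx > 0" "k > 0" "\<sigma> > 0" "l > 0" "\<rho> \<ge> 0"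
    and "smooth_fun S" and "saturating S"
    and "\<And>x. S (- x) = - S x" and "S 0 = 0" and "deriv S 0 = 1"
  shows "\<exists>\<epsilon>>0.
    (\<forall>u0 U z1 b1. d < u0 \<and> u0 < d + \<epsilon> \<and> open U \<and> u0 \<in> U \<and>
        (\<forall>u\<in>U. z1 differentiable (at u) \<and> b1 differentiable (at u) \<and>
                 saddle_node S d u Kx Kz k \<sigma> \<rho> l (z1 u) (b1 u) \<and> z1 u > 0 \<and> b1 u < 0)
        \<longrightarrow> deriv b1 u0 < 0)
  \<and> (\<forall>u0 U z2 b2. d < u0 \<and> u0 < d + \<epsilon> \<and> open U \<and> u0 \<in> U \<and>
        (\<forall>u\<in>U. z2 differentiable (at u) \<and> b2 differentiable (at u) \<and>
                 saddle_node S d u Kx Kz k \<sigma> \<rho> l (z2 u) (b2 u) \<and> z2 u < 0 \<and> b2 u > 0)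
        \<longrightarrow> deriv b2 u0 > 0)"
proof -
  have S_differentiable: "S differentiable (at x)" for x
    using \<open>smooth_fun S\<close> unfolding smooth_fun_def by (metis funpow_0)
  have "strict_mono S"
    using saturating_strict_mono[OF \<open>saturating S\<close> S_differentiable] .
  then have S_pos: "0 < z \<Longrightarrow> 0 < S z" and S_neg: "z < 0 \<Longrightarrow> S z < 0" for z
    using \<open>S 0 = 0\<close> by (metis strict_monoD)+
  show ?thesis
  proof (intro exI[of _ 1] conjI allI impI)
    fix u0 U z b
    assume "d < u0 \<and> u0 < d + 1 \<and> open U \<and> u0 \<in> U \<and>
      (\<forall>u\<in>U. z differentiable (at u) \<and> b differentiable (at u) \<and>
               saddle_node S d u Kx Kz k \<sigma> \<rho> l (z u) (b u) \<and> z u > 0 \<and> b u < 0)"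
    then show "deriv b u0 < 0"
      using saddle_node_branch_deriv[OF \<open>Kz > 0\<close> _ S_differentiable, of Kx U u0 z d k \<sigma> \<rho> l b]
        \<open>Kx > 0\<close> S_pos by auto
  next
    fix u0 U z b
    assume "d < u0 \<and> u0 < d + 1 \<and> open U \<and> u0 \<in> U \<and>
      (\<forall>u\<in>U. z differentiable (at u) \<and> b differentiable (at u) \<and>
               saddle_node S d u Kx Kz k \<sigma> \<rho> l (z u) (b u) \<and> z u < 0 \<and> b u > 0)"
    then show "deriv b u0 > 0"
      using saddle_node_branch_deriv[OF \<open>Kz > 0\<close> _ S_differentiable, of Kx U u0 z d k \<sigma> \<rho> l b]
        \<open>Kx > 0\<close> S_neg by auto
  qed simp
qed

end
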